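(* Let the data $(I,1,c,\{h_a\},S,\{d_a\},\{\chi_a\})$ be as in the context, and fix an integer $n\ge 1$. For $x,y>0$ define $$\mathcal{T}_1(n;x,y)=\frac{\chi_1\!\left(ix+\tfrac1n\right)\,\chi_1\!\left(iy-\tfrac1n\right)}{\chi_1(ix)\,\chi_1(iy)} .$$ Assume $\sum_{a\in I} d_a^2\theta_a^n\neq 0$. Then, as $x\to\infty$ and $y\to 0^+$ (independently), $\mathcal{T}_1(n;x,y)\neq 0$ for all sufficiently large $x$ and small $y$, and $$\frac{\mathcal{T}_1(n;x,y)}{|\mathcal{T}_1(n;x,y)|}\;\longrightarrow\; e^{-2\pi i\left(\frac{2}{n}+n\right)\frac{c}{24}}\;\zeta_n,\qquad \zeta_n:=\frac{\sum_{a} d_a^2\theta_a^n}{\bigl|\sum_a d_a^2\theta_a^n\bigr|}.$$ In other words, $\mathcal{T}_1(n;x,y)$ is asymptotically a positive real multiple of $e^{-2\pi i(\frac2n+n)\frac{c}{24}}\sum_a d_a^2\theta_a^n$.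
   Context: Physical interpretation (not needed for the mathematics): $\mathcal{T}_1$ models the expectation value of rotating half of a cylinder by angle $2\pi/n$, with $x=\xi_l/L$, $y=\xi_r/L$. Data: $I$ is a finite index set with a distinguished element $1$. $c\in\mathbb{R}$. Real numbers $h_a$ ($a\in I$) with $h_1=0$ and $h_a>0$ for $a\neq 1$; set $\theta_a=e^{2\pi i h_a}$. Positive reals $d_a$ ($a\in I$) and $\mathcal{D}=\sqrt{\sum_a d_a^2}$. $S=(S_{ab})_{a,b\in I}$ is a complex matrix with $S_{a1}=S_{1a}=d_a/\mathcal{D}$ for all $a$. $T$ is the diagonal matrix $T_{ab}=\delta_{ab}e^{2\pi i(h_a-c/24)}$. The functions $\chi_a$ ($a\in I$) are holomorphic on the upper half-plane $\mathbb{H}$ and have absolutely convergent expansions $\chi_a(\tau)=\sum_{k\ge 0}N_{a,k}\,e^{2\pi i\tau(h_a-c/24+k)}$ with nonnegative integers $N_{a,k}$, $N_{a,0}\ge1$ and $N_{1,0}=1$; they satisfy the modular covariance $\chi_a(-1/\tau)=\sum_b S_{ab}\chi_b(\tau)$ and $\chi_a(\tau+1)=e^{2\pi i(h_a-c/24)}\chi_a(\tau)$ for all $\tau\in\mathbb{H}$. *)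

theory Defs
  imports "HOL-Complex_Analysis.Complex_Analysis"
begin

definition T1 :: "(complex \<Rightarrow> complex) \<Rightarrow> nat \<Rightarrow> real \<Rightarrow> real \<Rightarrow> complex" where
  "T1 chi1 n x y =
     chi1 (\<i> * of_real x + 1 / of_nat n) * chi1 (\<i> * of_real y - 1 / of_nat n)
     / (chi1 (\<i> * of_real x) * chi1 (\<i> * of_real y))"

definition phase :: "complex \<Rightarrow> complex" where
  "phase z = z / complex_of_real (cmod z)"

definition theta :: "real \<Rightarrow> complex" where
  "theta ha = exp (2 * pi * \<i> * complex_of_real ha)"

end

theory Submission
  imports Defs "HOL-Real_Asymp.Real_Asymp"
begin

text \<open>Multiply every character by the vacuum factor \<open>q^{c/24}\<close>, \<open>q = e^{2\<pi>i\<tau>}\<close>. Since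
  \<open>h\<^sub>a > 0 = h\<^sub>1\<close> for \<open>a \<noteq> 1\<close>, as \<open>Im \<tau> \<rightarrow> \<infinity>\<close> the rescaled vacuum character tends to
  \<open>N\<^sub>1\<^sub>0 = 1\<close> and all others to \<open>0\<close>. The points \<open>ix + 1/n\<close> and \<open>ix\<close> approach the cusp
  as \<open>x \<rightarrow> \<infinity>\<close>; the points \<open>iy\<close> and \<open>iy - 1/n\<close> are moved there by \<open>S\<close> and \<open>S T\<^sup>n S\<close>,
  after which only the vacuum survives and leaves \<open>S\<^sub>1\<^sub>1 > 0\<close> and
  \<open>\<Sum>\<^sub>b S\<^sub>1\<^sub>b T\<^sub>b\<^sub>b\<^sup>n S\<^sub>b\<^sub>1 = e^{-2\<pi>inc/24} \<Sum>\<^sub>a d\<^sub>a\<^sup>2 \<theta>\<^sub>a\<^sup>n / D\<^sup>2\<close>. The four vacuum factors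
  combine into \<open>e^{-2\<pi>i(2/n)c/24}\<close> times a positive real number, invisible to the phase.\<close>

lemma qexp_leading_term:
  fixes f :: "complex \<Rightarrow> complex" and a :: "nat \<Rightarrow> complex" and e :: real
  assumes qexp: "\<And>\<tau>. Im \<tau> > 0 \<Longrightarrow>
      (\<lambda>k. a k * exp (2 * pi * \<i> * \<tau> * complex_of_real (e + real k))) sums f \<tau>"
    and lim: "filterlim (\<lambda>p. Im (\<tau> p)) at_top F"
  shows "((\<lambda>p. f (\<tau> p) * exp (- (2 * pi * \<i> * \<tau> p * complex_of_real e))) \<longlongrightarrow> a 0) F"
proof -
  define P where "P w = (\<Sum>k. a k * w ^ k)" for w :: complex
  have power_series: "(\<lambda>k. a k * exp (2 * pi * \<i> * t) ^ k)
      sums (f t * exp (- (2 * pi * \<i> * t * complex_of_real e)))" if "Im t > 0" for t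
  proof -
    have "exp (2 * pi * \<i> * t * complex_of_real (e + real k)) * exp (- (2 * pi * \<i> * t * complex_of_real e))
        = exp (2 * pi * \<i> * t) ^ k" for k
      by (simp add: exp_add[symmetric] exp_of_nat_mult[symmetric] algebra_simps)
    then have shift: "a k * exp (2 * pi * \<i> * t * complex_of_real (e + real k)) * exp (- (2 * pi * \<i> * t * complex_of_real e))
        = a k * exp (2 * pi * \<i> * t) ^ k" for k
      by (simp only: mult.assoc)
    moreover have "(\<lambda>k. a k * exp (2 * pi * \<i> * t * complex_of_real (e + real k))
        * exp (- (2 * pi * \<i> * t * complex_of_real e)))
        sums (f t * exp (- (2 * pi * \<i> * t * complex_of_real e)))"
      by (rule sums_mult2[OF qexp[OF that]])
    ultimately show ?thesis by (simp only: shift)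
  qed
  then have "f t * exp (- (2 * pi * \<i> * t * complex_of_real e)) = P (exp (2 * pi * \<i> * t))"
    if "Im t > 0" for t
    using that by (simp add: P_def sums_iff)
  moreover have "\<forall>\<^sub>F p in F. Im (\<tau> p) > 0"
    using lim by (simp add: filterlim_at_top_dense)
  ultimately have eq: "\<forall>\<^sub>F p in F.
      P (exp (2 * pi * \<i> * \<tau> p)) = f (\<tau> p) * exp (- (2 * pi * \<i> * \<tau> p * complex_of_real e))"
    by (auto elim: eventually_mono)
  have "summable (\<lambda>k. a k * exp (2 * pi * \<i> * \<i>) ^ k)"
    using power_series[of \<i>] by (simp add: sums_iff)
  then have "isCont P 0"
    unfolding P_def by (rule isCont_powser) simp
  moreover have "((\<lambda>p. exp (2 * pi * \<i> * \<tau> p)) \<longlongrightarrow> 0) F"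
  proof -
    have "((\<lambda>t. exp (- 2 * pi * t)) \<longlongrightarrow> 0) at_top" by real_asymp
    then have "((\<lambda>p. exp (- 2 * pi * Im (\<tau> p))) \<longlongrightarrow> 0) F"
      using filterlim_compose[OF _ lim] by blast
    then show ?thesis
      by (subst tendsto_norm_zero_iff[symmetric]) simp
  qed
  ultimately have "((\<lambda>p. P (exp (2 * pi * \<i> * \<tau> p))) \<longlongrightarrow> P 0) F"
    by (rule isCont_tendsto_compose)
  moreover have "P 0 = a 0"
    unfolding P_def using powser_zero[of a] by simp
  ultimately show ?thesis
    using Lim_transform_eventually[OF _ eq] by simp
qed

lemma qexp_below_leading_exponent:
  fixes f :: "complex \<Rightarrow> complex" and a :: "nat \<Rightarrow> complex" and e e' :: real
  assumes qexp: "\<And>\<tau>. Im \<tau> > 0 \<Longrightarrow>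
      (\<lambda>k. a k * exp (2 * pi * \<i> * \<tau> * complex_of_real (e + real k))) sums f \<tau>"
    and lim: "filterlim (\<lambda>p. Im (\<tau> p)) at_top F"
    and "e' < e"
  shows "((\<lambda>p. f (\<tau> p) * exp (- (2 * pi * \<i> * \<tau> p * complex_of_real e'))) \<longlongrightarrow> 0) F"
proof -
  have "((\<lambda>p. exp (2 * pi * \<i> * \<tau> p * complex_of_real (e - e'))) \<longlongrightarrow> 0) F"
  proof -
    have "((\<lambda>t. exp (- (2 * pi * (e - e')) * t)) \<longlongrightarrow> 0) at_top"
      using \<open>e' < e\<close> by real_asymp
    then have "((\<lambda>p. exp (- (2 * pi * (e - e')) * Im (\<tau> p))) \<longlongrightarrow> 0) F"
      using filterlim_compose[OF _ lim] by blast
    then show ?thesis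
      by (subst tendsto_norm_zero_iff[symmetric]) (simp add: algebra_simps)
  qed
  from tendsto_mult[OF qexp_leading_term[OF qexp lim] this]
  have "((\<lambda>p. f (\<tau> p) * exp (- (2 * pi * \<i> * \<tau> p * complex_of_real e))
      * exp (2 * pi * \<i> * \<tau> p * complex_of_real (e - e'))) \<longlongrightarrow> 0) F"
    by simp
  then show ?thesis
    by (simp add: mult.assoc exp_add[symmetric] algebra_simps)
qed

lemma iterate_quasi_periodic:
  fixes f :: "complex \<Rightarrow> complex"
  assumes "\<And>\<tau>. Im \<tau> > 0 \<Longrightarrow> f (\<tau> + 1) = z * f \<tau>" and "Im t > 0"
  shows "f (t + of_nat k) = z ^ k * f t"
proof (induction k)
  case (Suc k)
  have "f (t + of_nat (Suc k)) = f ((t + of_nat k) + 1)" by (simp add: algebra_simps)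
  also have "\<dots> = z * f (t + of_nat k)" using assms by simp
  finally show ?case using Suc by simp
qed simp

lemma Im_minus_inverse_pos: "Im \<tau> > 0 \<Longrightarrow> Im (- 1 / \<tau>) > 0"
  by (simp add: Im_divide add_nonneg_pos)

lemma minus_inverse_i_times: "y \<noteq> 0 \<Longrightarrow> - 1 / (\<i> * complex_of_real (1 / y)) = \<i> * complex_of_real y"
  by (simp add: field_simps)

lemma minus_inverse_shift_minus_inverse:
  fixes z :: "'a :: field"
  assumes "z \<noteq> 0" "m * z + 1 \<noteq> 0"
  shows "- 1 / (- 1 / (z / (m * z + 1)) + m) = z"
  using assms by (simp add: field_simps)

lemma ST_power_preimage:
  assumes "n > 0" "y > 0"
  shows "- 1 / (- 1 / (1 / of_nat n + \<i> * complex_of_real (1 / (real n ^ 2 * y))) + of_nat n)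
    = \<i> * complex_of_real y - 1 / of_nat n" (is "_ = ?z")
proof -
  have "of_nat n * ?z + 1 = \<i> * of_nat n * complex_of_real y"
    using assms by (simp add: field_simps)
  then have nz: "of_nat n * ?z + 1 \<noteq> 0" and
    preimage: "1 / of_nat n + \<i> * complex_of_real (1 / (real n ^ 2 * y)) = ?z / (of_nat n * ?z + 1)"
    using assms by (simp_all add: field_simps power2_eq_square)
  have "?z \<noteq> 0"
    using assms by (simp add: complex_eq_iff)
  from minus_inverse_shift_minus_inverse[OF this nz] show ?thesis
    unfolding preimage .
qed

lemma mult_divide_mult_rescale:
  fixes a b c d x y z w :: "'a :: field"
  assumes "x \<noteq> 0" "y \<noteq> 0" "z \<noteq> 0" "w \<noteq> 0"
  shows "a * c / (b * d) = (a * x) * (c * z) / ((b * y) * (d * w)) * (y * w / (x * z))"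
  using assms by (cases "b = 0"; cases "d = 0") (simp_all add: field_simps)

lemma phase_mult_pos_real: "r > 0 \<Longrightarrow> phase (z * complex_of_real r) = phase z"
  by (simp add: phase_def norm_mult)

lemma phase_mult_unimodular: "cmod u = 1 \<Longrightarrow> phase (u * z) = u * phase z"
  by (simp add: phase_def norm_mult)

lemma tendsto_phase: "(f \<longlongrightarrow> L) F \<Longrightarrow> L \<noteq> 0 \<Longrightarrow> ((\<lambda>p. phase (f p)) \<longlongrightarrow> phase L) F"
  unfolding phase_def by (intro tendsto_intros) auto

locale rcft_characters =
  fixes I :: "'i set" and one :: 'i and c :: real
    and h d :: "'i \<Rightarrow> real" and S :: "'i \<Rightarrow> 'i \<Rightarrow> complex"
    and chi :: "'i \<Rightarrow> complex \<Rightarrow> complex" and N :: "'i \<Rightarrow> nat \<Rightarrow> nat"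
  assumes finI: "finite I" and oneI: "one \<in> I"
    and h_one: "h one = 0" and h_pos: "\<And>a. a \<in> I \<Longrightarrow> a \<noteq> one \<Longrightarrow> h a > 0"
    and d_pos: "\<And>a. a \<in> I \<Longrightarrow> d a > 0"
    and S_col: "\<And>a. a \<in> I \<Longrightarrow> S a one = complex_of_real (d a / sqrt (\<Sum>b\<in>I. (d b)\<^sup>2))"
    and S_row: "\<And>a. a \<in> I \<Longrightarrow> S one a = complex_of_real (d a / sqrt (\<Sum>b\<in>I. (d b)\<^sup>2))"
    and chi_exp: "\<And>a \<tau>. a \<in> I \<Longrightarrow> Im \<tau> > 0 \<Longrightarrow>
        (\<lambda>k. of_nat (N a k) * exp (2 * pi * \<i> * \<tau> * complex_of_real (h a - c / 24 + real k))) sums chi a \<tau>"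
    and N_one0: "N one 0 = 1"
    and S_trans: "\<And>a \<tau>. a \<in> I \<Longrightarrow> Im \<tau> > 0 \<Longrightarrow> chi a (- 1 / \<tau>) = (\<Sum>b\<in>I. S a b * chi b \<tau>)"
    and T_trans: "\<And>a \<tau>. a \<in> I \<Longrightarrow> Im \<tau> > 0 \<Longrightarrow>
        chi a (\<tau> + 1) = exp (2 * pi * \<i> * complex_of_real (h a - c / 24)) * chi a \<tau>"
begin

definition vacuum_factor :: "complex \<Rightarrow> complex" where
  "vacuum_factor \<tau> = exp (2 * pi * \<i> * \<tau> * complex_of_real (c / 24))"

definition chi_rescaled :: "'i \<Rightarrow> complex \<Rightarrow> complex" where
  "chi_rescaled a \<tau> = chi a \<tau> * vacuum_factor \<tau>"

definition T_eigenvalue :: "'i \<Rightarrow> complex" where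
  "T_eigenvalue a = exp (2 * pi * \<i> * complex_of_real (h a - c / 24))"

definition total_dim_sq :: real where
  "total_dim_sq = (\<Sum>b\<in>I. (d b)\<^sup>2)"

lemma total_dim_sq_pos: "total_dim_sq > 0"
proof -
  have "(d one)\<^sup>2 \<le> total_dim_sq"
    unfolding total_dim_sq_def using finI oneI by (intro member_le_sum) auto
  moreover have "(d one)\<^sup>2 > 0" using d_pos[OF oneI] by simp
  ultimately show ?thesis by linarith
qed

lemma S_one_one: "S one one = complex_of_real (d one / sqrt total_dim_sq)"
  using S_col[OF oneI] by (simp add: total_dim_sq_def)

lemma chi_rescaled_tendsto:
  assumes lim: "filterlim (\<lambda>p. Im (\<tau> p)) at_top F" and "b \<in> I"
  shows "((\<lambda>p. chi_rescaled b (\<tau> p)) \<longlongrightarrow> (if b = one then 1 else 0)) F"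
proof (cases "b = one")
  case True
  from qexp_leading_term[OF chi_exp[OF oneI] lim] show ?thesis
    using True N_one0 by (simp add: chi_rescaled_def vacuum_factor_def h_one)
next
  case False
  have "- c / 24 < h b - c / 24" using h_pos[OF \<open>b \<in> I\<close> False] by simp
  from qexp_below_leading_exponent[OF chi_exp[OF \<open>b \<in> I\<close>] lim this] show ?thesis
    using False by (simp add: chi_rescaled_def vacuum_factor_def)
qed

lemma sum_chi_rescaled_tendsto:
  assumes "filterlim (\<lambda>p. Im (\<tau> p)) at_top F"
  shows "((\<lambda>p. \<Sum>b\<in>I. M b * chi_rescaled b (\<tau> p)) \<longlongrightarrow> M one) F"
proof -
  have "((\<lambda>p. \<Sum>b\<in>I. M b * chi_rescaled b (\<tau> p)) \<longlongrightarrow> (\<Sum>b\<in>I. M b * (if b = one then 1 else 0))) F"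
    using assms by (intro tendsto_sum tendsto_mult_left chi_rescaled_tendsto)
  moreover have "(\<Sum>b\<in>I. M b * (if b = one then 1 else 0)) = M one"
    using finI oneI by (simp add: if_distrib cong: if_cong)
  ultimately show ?thesis by simp
qed

lemma chi_STnS:
  assumes "Im \<tau> > 0"
  shows "chi one (- 1 / (- 1 / \<tau> + of_nat n))
    = (\<Sum>b\<in>I. S one b * (T_eigenvalue b ^ n * (\<Sum>a\<in>I. S b a * chi a \<tau>)))"
proof -
  have Im_S: "Im (- 1 / \<tau>) > 0" using Im_minus_inverse_pos[OF assms] .
  then have "chi one (- 1 / (- 1 / \<tau> + of_nat n)) = (\<Sum>b\<in>I. S one b * chi b (- 1 / \<tau> + of_nat n))"
    by (intro S_trans oneI) simp
  also have "\<dots> = (\<Sum>b\<in>I. S one b * (T_eigenvalue b ^ n * (\<Sum>a\<in>I. S b a * chi a \<tau>)))"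
  proof (rule sum.cong[OF refl])
    fix b assume "b \<in> I"
    have "chi b (- 1 / \<tau> + of_nat n) = T_eigenvalue b ^ n * chi b (- 1 / \<tau>)"
      unfolding T_eigenvalue_def using T_trans[OF \<open>b \<in> I\<close>] Im_S by (rule iterate_quasi_periodic)
    with S_trans[OF \<open>b \<in> I\<close> assms] show "S one b * chi b (- 1 / \<tau> + of_nat n)
        = S one b * (T_eigenvalue b ^ n * (\<Sum>a\<in>I. S b a * chi a \<tau>))"
      by simp
  qed
  finally show ?thesis .
qed

lemma vacuum_cusp_tendsto: "((\<lambda>x. chi_rescaled one (\<i> * complex_of_real x + w)) \<longlongrightarrow> 1) at_top"
proof -
  have "filterlim (\<lambda>x. Im w + x) at_top at_top"
    by (rule filterlim_tendsto_add_at_top[OF tendsto_const filterlim_ident])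
  then show ?thesis
    using chi_rescaled_tendsto[OF _ oneI, of "\<lambda>x. \<i> * complex_of_real x + w"] by (simp add: add.commute)
qed

lemma vacuum_S_tendsto:
  "((\<lambda>y. chi one (\<i> * complex_of_real y) * vacuum_factor (\<i> * complex_of_real (1 / y)))
    \<longlongrightarrow> S one one) (at_right 0)"
proof -
  have lim: "filterlim (\<lambda>y. Im (\<i> * complex_of_real (1 / y))) at_top (at_right 0)"
    using filterlim_inverse_at_top_right by (simp add: inverse_eq_divide)
  have eq: "\<forall>\<^sub>F y in at_right 0. (\<Sum>b\<in>I. S one b * chi_rescaled b (\<i> * complex_of_real (1 / y)))
      = chi one (\<i> * complex_of_real y) * vacuum_factor (\<i> * complex_of_real (1 / y))"
    using eventually_at_right_less
  proof eventually_elim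
    case (elim y)
    then have "chi one (\<i> * complex_of_real y) = (\<Sum>b\<in>I. S one b * chi b (\<i> * complex_of_real (1 / y)))"
      using S_trans[OF oneI, of "\<i> * complex_of_real (1 / y)"] by (simp add: minus_inverse_i_times)
    then show ?case
      by (simp add: chi_rescaled_def sum_distrib_right mult.assoc)
  qed
  from Lim_transform_eventually[OF sum_chi_rescaled_tendsto[OF lim] eq] show ?thesis .
qed

lemma vacuum_STnS_tendsto:
  assumes "n > 0"
  shows "((\<lambda>y. chi one (\<i> * complex_of_real y - 1 / of_nat n)
      * vacuum_factor (1 / of_nat n + \<i> * complex_of_real (1 / (real n ^ 2 * y))))
    \<longlongrightarrow> (\<Sum>b\<in>I. S one b * (T_eigenvalue b ^ n * S b one))) (at_right 0)"
proof -
  define u where "u y = 1 / of_nat n + \<i> * complex_of_real (1 / (real n ^ 2 * y))" for y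
  have "filterlim (\<lambda>y. 1 / real n ^ 2 * inverse y) at_top (at_right 0)"
    using assms by (intro filterlim_tendsto_pos_mult_at_top[OF tendsto_const _ filterlim_inverse_at_top_right]) simp
  then have lim: "filterlim (\<lambda>y. Im (u y)) at_top (at_right 0)"
    by (simp add: u_def inverse_eq_divide)
  have eq: "\<forall>\<^sub>F y in at_right 0.
      (\<Sum>b\<in>I. S one b * (T_eigenvalue b ^ n * (\<Sum>a\<in>I. S b a * chi_rescaled a (u y))))
      = chi one (\<i> * complex_of_real y - 1 / of_nat n) * vacuum_factor (u y)"
    using eventually_at_right_less
  proof eventually_elim
    case (elim y)
    then have "Im (u y) > 0" using assms by (simp add: u_def)
    from chi_STnS[OF this, of n] ST_power_preimage[OF assms elim]
    have "chi one (\<i> * complex_of_real y - 1 / of_nat n)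
        = (\<Sum>b\<in>I. S one b * (T_eigenvalue b ^ n * (\<Sum>a\<in>I. S b a * chi a (u y))))"
      by (simp add: u_def)
    then show ?case
      by (simp add: chi_rescaled_def sum_distrib_right mult.assoc)
  qed
  have "((\<lambda>y. \<Sum>b\<in>I. S one b * (T_eigenvalue b ^ n * (\<Sum>a\<in>I. S b a * chi_rescaled a (u y))))
      \<longlongrightarrow> (\<Sum>b\<in>I. S one b * (T_eigenvalue b ^ n * S b one))) (at_right 0)"
    by (intro tendsto_sum tendsto_mult_left sum_chi_rescaled_tendsto[OF lim])
  from Lim_transform_eventually[OF this eq] show ?thesis
    unfolding u_def .
qed

lemma STnS_vacuum_coefficient:
  "(\<Sum>b\<in>I. S one b * (T_eigenvalue b ^ n * S b one))
    = exp (- 2 * pi * \<i> * complex_of_real (c / 24)) ^ n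
      * (\<Sum>a\<in>I. complex_of_real ((d a)\<^sup>2) * theta (h a) ^ n) / complex_of_real total_dim_sq"
  unfolding sum_distrib_left sum_divide_distrib
proof (rule sum.cong[OF refl])
  fix b assume "b \<in> I"
  have "S one b * S b one = complex_of_real ((d b / sqrt total_dim_sq)\<^sup>2)"
    unfolding S_col[OF \<open>b \<in> I\<close>] S_row[OF \<open>b \<in> I\<close>] total_dim_sq_def
    by (simp only: of_real_mult[symmetric] power2_eq_square)
  also have "(d b / sqrt total_dim_sq)\<^sup>2 = (d b)\<^sup>2 / total_dim_sq"
    using total_dim_sq_pos by (simp add: power_divide)
  finally have S_prod: "S one b * S b one = complex_of_real ((d b)\<^sup>2 / total_dim_sq)" .
  have T_eig: "T_eigenvalue b = exp (- 2 * pi * \<i> * complex_of_real (c / 24)) * theta (h b)"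
    unfolding T_eigenvalue_def theta_def by (simp add: exp_add[symmetric] algebra_simps)
  have "S one b * (T_eigenvalue b ^ n * S b one) = (S one b * S b one) * T_eigenvalue b ^ n"
    by (simp only: mult_ac)
  also have "\<dots> = exp (- 2 * pi * \<i> * complex_of_real (c / 24)) ^ n
      * (complex_of_real ((d b)\<^sup>2) * theta (h b) ^ n) / complex_of_real total_dim_sq"
    unfolding S_prod T_eig by (simp add: power_mult_distrib)
  finally show "S one b * (T_eigenvalue b ^ n * S b one)
      = exp (- 2 * pi * \<i> * complex_of_real (c / 24)) ^ n
        * (complex_of_real ((d b)\<^sup>2) * theta (h b) ^ n) / complex_of_real total_dim_sq" .
qed

lemma T1_factorization:
  "T1 (chi one) n x y =
    chi_rescaled one (\<i> * complex_of_real x + 1 / of_nat n)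
      * (chi one (\<i> * complex_of_real y - 1 / of_nat n)
        * vacuum_factor (1 / of_nat n + \<i> * complex_of_real (1 / (real n ^ 2 * y))))
    / (chi_rescaled one (\<i> * complex_of_real x)
      * (chi one (\<i> * complex_of_real y) * vacuum_factor (\<i> * complex_of_real (1 / y))))
    * exp (- 2 * pi * \<i> * complex_of_real (2 / real n * c / 24))
    * complex_of_real (exp (- 2 * pi * c / 24 * (1 / y - 1 / (real n ^ 2 * y))))"
proof -
  define tA where "tA = \<i> * complex_of_real x + 1 / of_nat n"
  define tB where "tB = \<i> * complex_of_real x"
  define tC where "tC = 1 / of_nat n + \<i> * complex_of_real (1 / (real n ^ 2 * y))"
  define tD where "tD = \<i> * complex_of_real (1 / y)"
  have "vacuum_factor tB * vacuum_factor tD / (vacuum_factor tA * vacuum_factor tC)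
      = exp (2 * pi * \<i> * tB * complex_of_real (c / 24) + 2 * pi * \<i> * tD * complex_of_real (c / 24)
        - (2 * pi * \<i> * tA * complex_of_real (c / 24) + 2 * pi * \<i> * tC * complex_of_real (c / 24)))"
    unfolding vacuum_factor_def by (simp only: exp_add exp_diff)
  also have "\<dots> = exp (- 2 * pi * \<i> * complex_of_real (2 / real n * c / 24)
      + complex_of_real (- 2 * pi * c / 24 * (1 / y - 1 / (real n ^ 2 * y))))"
    unfolding tA_def tB_def tC_def tD_def by (simp add: algebra_simps)
  also have "\<dots> = exp (- 2 * pi * \<i> * complex_of_real (2 / real n * c / 24))
        * complex_of_real (exp (- 2 * pi * c / 24 * (1 / y - 1 / (real n ^ 2 * y))))"
    by (simp only: exp_add exp_of_real)
  finally have ratio: "vacuum_factor tB * vacuum_factor tD / (vacuum_factor tA * vacuum_factor tC)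
      = exp (- 2 * pi * \<i> * complex_of_real (2 / real n * c / 24))
        * complex_of_real (exp (- 2 * pi * c / 24 * (1 / y - 1 / (real n ^ 2 * y))))" .
  have "T1 (chi one) n x y
      = chi one tA * chi one (\<i> * complex_of_real y - 1 / of_nat n) / (chi one tB * chi one (\<i> * complex_of_real y))"
    by (simp add: T1_def tA_def tB_def)
  also have "\<dots> = (chi one tA * vacuum_factor tA) * (chi one (\<i> * complex_of_real y - 1 / of_nat n) * vacuum_factor tC)
      / ((chi one tB * vacuum_factor tB) * (chi one (\<i> * complex_of_real y) * vacuum_factor tD))
      * (vacuum_factor tB * vacuum_factor tD / (vacuum_factor tA * vacuum_factor tC))"
    by (rule mult_divide_mult_rescale) (simp_all add: vacuum_factor_def)
  finally show ?thesis
    unfolding ratio by (simp add: chi_rescaled_def tA_def tB_def tC_def tD_def)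
qed

lemma vacuum_phase_constant:
  "exp (- 2 * pi * \<i> * complex_of_real (2 / real n * c / 24)) * exp (- 2 * pi * \<i> * complex_of_real (c / 24)) ^ n
    = exp (- 2 * pi * \<i> * complex_of_real ((2 / real n + real n) * c / 24))"
proof -
  have "exp (- 2 * pi * \<i> * complex_of_real (2 / real n * c / 24)) * exp (- 2 * pi * \<i> * complex_of_real (c / 24)) ^ n
      = exp (- 2 * pi * \<i> * complex_of_real (2 / real n * c / 24) + of_nat n * (- 2 * pi * \<i> * complex_of_real (c / 24)))"
    by (simp only: exp_of_nat_mult[symmetric] exp_add[symmetric])
  also have "- 2 * pi * \<i> * complex_of_real (2 / real n * c / 24) + of_nat n * (- 2 * pi * \<i> * complex_of_real (c / 24))
      = - 2 * pi * \<i> * complex_of_real ((2 / real n + real n) * c / 24)"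
    by (simp add: ring_distribs)
  finally show ?thesis .
qed

lemma STnS_over_S_vacuum_limit:
  "(\<Sum>b\<in>I. S one b * (T_eigenvalue b ^ n * S b one)) / S one one
      * exp (- 2 * pi * \<i> * complex_of_real (2 / real n * c / 24))
    = exp (- 2 * pi * \<i> * complex_of_real ((2 / real n + real n) * c / 24))
      * (\<Sum>a\<in>I. complex_of_real ((d a)\<^sup>2) * theta (h a) ^ n)
      * complex_of_real (sqrt total_dim_sq / (total_dim_sq * d one))"
  unfolding STnS_vacuum_coefficient S_one_one vacuum_phase_constant[symmetric]
  using total_dim_sq_pos d_pos[OF oneI] by (simp add: field_simps)

theorem phase_T1_tendsto:
  assumes "n \<ge> 1" and nonzero: "(\<Sum>a\<in>I. complex_of_real ((d a)\<^sup>2) * theta (h a) ^ n) \<noteq> 0"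
  shows "(\<forall>\<^sub>F p in at_top \<times>\<^sub>F at_right 0. T1 (chi one) n (fst p) (snd p) \<noteq> 0) \<and>
    ((\<lambda>p. phase (T1 (chi one) n (fst p) (snd p))) \<longlongrightarrow>
       exp (- 2 * pi * \<i> * complex_of_real ((2 / real n + real n) * c / 24))
         * phase (\<Sum>a\<in>I. complex_of_real ((d a)\<^sup>2) * theta (h a) ^ n))
      (at_top \<times>\<^sub>F at_right 0)"
proof -
  define F :: "(real \<times> real) filter" where "F = at_top \<times>\<^sub>F at_right 0"
  define s where "s = (\<Sum>a\<in>I. complex_of_real ((d a)\<^sup>2) * theta (h a) ^ n)"
  define \<alpha> where "\<alpha> = exp (- 2 * pi * \<i> * complex_of_real ((2 / real n + real n) * c / 24))"
  define \<omega> where "\<omega> = exp (- 2 * pi * \<i> * complex_of_real (2 / real n * c / 24))"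
  define W where "W p = chi_rescaled one (\<i> * complex_of_real (fst p) + 1 / of_nat n)
      * (chi one (\<i> * complex_of_real (snd p) - 1 / of_nat n)
        * vacuum_factor (1 / of_nat n + \<i> * complex_of_real (1 / (real n ^ 2 * snd p))))
    / (chi_rescaled one (\<i> * complex_of_real (fst p))
      * (chi one (\<i> * complex_of_real (snd p)) * vacuum_factor (\<i> * complex_of_real (1 / snd p))))
    * \<omega>" for p
  define r where "r = sqrt total_dim_sq / (total_dim_sq * d one)"
  have "n > 0" using assms by simp
  have r_pos: "r > 0" using total_dim_sq_pos d_pos[OF oneI] by (simp add: r_def)
  have \<alpha>_unimodular: "cmod \<alpha> = 1" by (simp add: \<alpha>_def norm_exp_eq_Re)
  have T1_eq: "T1 (chi one) n (fst p) (snd p)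
      = W p * complex_of_real (exp (- 2 * pi * c / 24 * (1 / snd p - 1 / (real n ^ 2 * snd p))))" for p
    unfolding T1_factorization W_def \<omega>_def ..
  have "S one one \<noteq> 0"
    using S_one_one d_pos[OF oneI] total_dim_sq_pos by simp
  then have "(W \<longlongrightarrow> 1 * (\<Sum>b\<in>I. S one b * (T_eigenvalue b ^ n * S b one)) / (1 * S one one) * \<omega>) F"
    unfolding W_def F_def
    by (intro tendsto_intros filterlim_compose[OF vacuum_cusp_tendsto filterlim_fst]
        filterlim_compose[OF vacuum_cusp_tendsto[where w = 0, simplified] filterlim_fst]
        filterlim_compose[OF vacuum_STnS_tendsto[OF \<open>n > 0\<close>] filterlim_snd]
        filterlim_compose[OF vacuum_S_tendsto filterlim_snd]) simp
  then have W_lim: "(W \<longlongrightarrow> \<alpha> * s * complex_of_real r) F"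
    using STnS_over_S_vacuum_limit by (simp add: \<alpha>_def \<omega>_def s_def r_def)
  have L_nonzero: "\<alpha> * s * complex_of_real r \<noteq> 0"
    using \<alpha>_unimodular nonzero r_pos by (auto simp: s_def)
  have "\<forall>\<^sub>F p in F. T1 (chi one) n (fst p) (snd p) \<noteq> 0"
    using tendsto_imp_eventually_ne[OF W_lim L_nonzero] by eventually_elim (simp add: T1_eq)
  moreover have "((\<lambda>p. phase (T1 (chi one) n (fst p) (snd p))) \<longlongrightarrow> \<alpha> * phase s) F"
    using tendsto_phase[OF W_lim L_nonzero]
    by (simp add: T1_eq phase_mult_pos_real phase_mult_unimodular[OF \<alpha>_unimodular] r_pos)
  ultimately show ?thesis unfolding F_def \<alpha>_def s_def by simp
qed

end

theorem mainTheorem1: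
  fixes I :: "'i set" and one :: 'i and c :: real
    and h d :: "'i \<Rightarrow> real" and S :: "'i \<Rightarrow> 'i \<Rightarrow> complex"
    and chi :: "'i \<Rightarrow> complex \<Rightarrow> complex" and N :: "'i \<Rightarrow> nat \<Rightarrow> nat"
    and n :: nat
  assumes finI: "finite I" and oneI: "one \<in> I"
    and h_one: "h one = 0" and h_pos: "\<And>a. a \<in> I \<Longrightarrow> a \<noteq> one \<Longrightarrow> h a > 0"
    and d_pos: "\<And>a. a \<in> I \<Longrightarrow> d a > 0"
    and S_col: "\<And>a. a \<in> I \<Longrightarrow> S a one = complex_of_real (d a / sqrt (\<Sum>b\<in>I. (d b)\<^sup>2))"
    and S_row: "\<And>a. a \<in> I \<Longrightarrow> S one a = complex_of_real (d a / sqrt (\<Sum>b\<in>I. (d b)\<^sup>2))"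
    and chi_holo: "\<And>a. a \<in> I \<Longrightarrow> chi a holomorphic_on {z. Im z > 0}"
    and chi_abs: "\<And>a \<tau>. a \<in> I \<Longrightarrow> Im \<tau> > 0 \<Longrightarrow>
        summable (\<lambda>k. norm (of_nat (N a k) * exp (2 * pi * \<i> * \<tau> * complex_of_real (h a - c / 24 + real k))))"
    and chi_exp: "\<And>a \<tau>. a \<in> I \<Longrightarrow> Im \<tau> > 0 \<Longrightarrow>
        (\<lambda>k. of_nat (N a k) * exp (2 * pi * \<i> * \<tau> * complex_of_real (h a - c / 24 + real k))) sums chi a \<tau>"
    and N0: "\<And>a. a \<in> I \<Longrightarrow> N a 0 \<ge> 1" and N_one0: "N one 0 = 1"
    and S_trans: "\<And>a \<tau>. a \<in> I \<Longrightarrow> Im \<tau> > 0 \<Longrightarrow> chi a (- 1 / \<tau>) = (\<Sum>b\<in>I. S a b * chi b \<tau>)"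
    and T_trans: "\<And>a \<tau>. a \<in> I \<Longrightarrow> Im \<tau> > 0 \<Longrightarrow>
        chi a (\<tau> + 1) = exp (2 * pi * \<i> * complex_of_real (h a - c / 24)) * chi a \<tau>"
    and n_pos: "n \<ge> 1"
    and nonzero: "(\<Sum>a\<in>I. complex_of_real ((d a)\<^sup>2) * theta (h a) ^ n) \<noteq> 0"
  shows "(\<forall>\<^sub>F p in at_top \<times>\<^sub>F at_right 0. T1 (chi one) n (fst p) (snd p) \<noteq> 0) \<and>
    ((\<lambda>p. phase (T1 (chi one) n (fst p) (snd p))) \<longlongrightarrow>
       exp (- 2 * pi * \<i> * complex_of_real ((2 / real n + real n) * c / 24))
         * phase (\<Sum>a\<in>I. complex_of_real ((d a)\<^sup>2) * theta (h a) ^ n))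
      (at_top \<times>\<^sub>F at_right 0)"
proof -
  interpret rcft_characters I one c h d S chi N
    using finI oneI h_one h_pos d_pos S_col S_row chi_exp N_one0 S_trans T_trans
    by unfold_locales
  show ?thesis using n_pos nonzero by (rule phase_T1_tendsto)
qed

end
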